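(* Let $\mathcal{X}$ be a convex subset of a normed space with norm $\|\cdot\|$, dual norm $\|\cdot\|_*$. For each $x\in\mathcal{X}$ let $d_x$ be a distribution on a sample space $\mathcal{S}$ and let $f(\cdot;s)$ be $\alpha$-strongly convex and differentiable on $\mathcal{X}$ for each $s$. Let $F(y,x)=\mathbb{E}_{s\sim d_y}[f(x;s)]$ and assume $\|\nabla_2F(x,z)-\nabla_2F(y,z)\|_*\le\beta\|x-y\|$ for all $x,y,z$. Given $x_1$, at iteration $n$ draw samples $s_{n,1},\dots,s_{n,m_n}$ from $d_{x_n}$, let $g_n(x)=\frac1{m_n}\sum_{k=1}^{m_n}f(x;s_{n,k})$, $f_n(x)=F(x_n,x)$, and $x_{n+1}=\arg\min_{x\in\mathcal{X}}\sum_{k=1}^ng_k(x)$. Let $\xi_n=\nabla f_n-\nabla g_n$, $\bar\xi_{n}=\frac1n\sum_{k=1}^n\xi_k$, $\theta=\beta/\alpha$, and $S_n=\frac1{n-1}\sum_{k=1}^{n-1}\|x_n-x_k\|$. Then for all $n\ge2$, $$\|x_{n+1}-x_n\|\le\frac{\theta S_n}{n}+\frac{1}{n\alpha}\left(\|\xi_n(x_n)\|_*+\|\bar\xi_{n-1}(x_n)\|_*\right).$$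
   Context: This is the stochastic (finite-sample) version of the value aggregation algorithm AggreVaTe; minimizers are assumed to exist. $\nabla_2$ denotes the gradient in the second argument. *)

theory Defs
  imports "HOL-Probability.Probability"
begin

definition strongly_convex_on :: "'a::real_normed_vector set \<Rightarrow> real \<Rightarrow> ('a \<Rightarrow> real) \<Rightarrow> bool" where
  "strongly_convex_on X \<alpha> f \<longleftrightarrow>
     (\<forall>x\<in>X. \<forall>y\<in>X. \<forall>t::real. 0 \<le> t \<and> t \<le> 1 \<longrightarrow>
        f ((1 - t) *\<^sub>R x + t *\<^sub>R y)
          \<le> (1 - t) * f x + t * f y - \<alpha> / 2 * t * (1 - t) * (norm (x - y))\<^sup>2)"

definition dual_norm :: "('a::real_normed_vector \<Rightarrow> real) \<Rightarrow> real" where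
  "dual_norm L = onorm L"

end

theory Submission
  imports Defs
begin

(* The iterate x_{n+1} minimizes the leader objective G_n = g_1 + ... + g_n, which is
   (n alpha)-strongly convex, while x_n minimizes G_{n-1}.  Combining the strong-convexity
   inequalities at both points with the first-order optimality of x_{n+1} for G_n and of x_n
   for G_{n-1} yields  n alpha |x_{n+1} - x_n|^2 <= - Dg_n(x_n)(x_{n+1} - x_n).  Writing Dg_k as
   the true gradient minus the error xi_k, the optimality of x_n for G_{n-1} reduces this to the
   errors xi_n and xibar_{n-1} plus the drift of the true gradients DF(x_k, x_n) - DF(x_n, x_n),
   which the Lipschitz condition bounds by beta |x_n - x_k|.  Dividing by |x_{n+1} - x_n| gives
   the claim; the bound is deterministic. *)

lemma strongly_convex_on_add:
  assumes "strongly_convex_on X a f" "strongly_convex_on X b g"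
  shows "strongly_convex_on X (a + b) (\<lambda>x. f x + g x)"
  unfolding strongly_convex_on_def
proof (intro ballI allI impI)
  fix x y t assume xy: "x \<in> X" "y \<in> X" and t: "0 \<le> t \<and> t \<le> (1::real)"
  have "f ((1 - t) *\<^sub>R x + t *\<^sub>R y) \<le> (1 - t) * f x + t * f y - a / 2 * t * (1 - t) * (norm (x - y))\<^sup>2"
    "g ((1 - t) *\<^sub>R x + t *\<^sub>R y) \<le> (1 - t) * g x + t * g y - b / 2 * t * (1 - t) * (norm (x - y))\<^sup>2"
    using assms xy t unfolding strongly_convex_on_def by auto
  then show "f ((1 - t) *\<^sub>R x + t *\<^sub>R y) + g ((1 - t) *\<^sub>R x + t *\<^sub>R y)
      \<le> (1 - t) * (f x + g x) + t * (f y + g y) - (a + b) / 2 * t * (1 - t) * (norm (x - y))\<^sup>2"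
    by (simp add: algebra_simps add_divide_distrib)
qed

lemma strongly_convex_on_cmult:
  assumes "strongly_convex_on X a f" "0 \<le> c"
  shows "strongly_convex_on X (c * a) (\<lambda>x. c * f x)"
  unfolding strongly_convex_on_def
proof (intro ballI allI impI)
  fix x y t assume xy: "x \<in> X" "y \<in> X" and t: "0 \<le> t \<and> t \<le> (1::real)"
  have "f ((1 - t) *\<^sub>R x + t *\<^sub>R y) \<le> (1 - t) * f x + t * f y - a / 2 * t * (1 - t) * (norm (x - y))\<^sup>2"
    using assms(1) xy t unfolding strongly_convex_on_def by auto
  from mult_left_mono[OF this assms(2)]
  show "c * f ((1 - t) *\<^sub>R x + t *\<^sub>R y)
      \<le> (1 - t) * (c * f x) + t * (c * f y) - c * a / 2 * t * (1 - t) * (norm (x - y))\<^sup>2"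
    by (simp add: algebra_simps)
qed

lemma strongly_convex_on_sum:
  assumes "finite I" "\<And>i. i \<in> I \<Longrightarrow> strongly_convex_on X (a i) (f i)"
  shows "strongly_convex_on X (\<Sum>i\<in>I. a i) (\<lambda>x. \<Sum>i\<in>I. f i x)"
  using assms
proof (induction I rule: finite_induct)
  case empty
  then show ?case by (simp add: strongly_convex_on_def)
next
  case (insert i I)
  then show ?case using strongly_convex_on_add[of X "a i" "f i"] by simp
qed

lemma strongly_convex_on_mean:
  assumes "finite I" "I \<noteq> {}" "\<And>i. i \<in> I \<Longrightarrow> strongly_convex_on X c (f i)"
  shows "strongly_convex_on X c (\<lambda>x. 1 / real (card I) * (\<Sum>i\<in>I. f i x))"
proof -
  have "strongly_convex_on X (real (card I) * c) (\<lambda>x. \<Sum>i\<in>I. f i x)"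
    using strongly_convex_on_sum[OF assms(1,3)] by simp
  from strongly_convex_on_cmult[OF this, of "1 / real (card I)"]
  have "strongly_convex_on X (1 / real (card I) * (real (card I) * c)) (\<lambda>x. 1 / real (card I) * (\<Sum>i\<in>I. f i x))"
    by simp
  then show ?thesis using assms(1,2) by simp
qed

lemma derivative_le_of_increment_bound:
  fixes \<phi> :: "real \<Rightarrow> real"
  assumes "(\<phi> has_real_derivative d) (at 0 within {0..1})"
    and "\<And>t. 0 < t \<Longrightarrow> t \<le> 1 \<Longrightarrow> \<phi> t - \<phi> 0 \<le> t * b + t * t * e"
  shows "d \<le> b"
proof -
  have quotient: "((\<lambda>t. (\<phi> t - \<phi> 0) / (t - 0)) \<longlongrightarrow> d) (at_right 0)"
    using assms(1) unfolding has_field_derivative_iff by (simp add: at_within_Icc_at_right)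
  have bound: "((\<lambda>t. b + t * e) \<longlongrightarrow> b + 0 * e) (at_right 0)"
    by (intro tendsto_intros)
  have "eventually (\<lambda>t. (\<phi> t - \<phi> 0) / (t - 0) \<le> b + t * e) (at_right (0::real))"
    unfolding eventually_at_right[of 0 "1::real", simplified]
    using assms(2) by (intro exI[of _ 1]) (auto simp: divide_le_eq algebra_simps)
  from tendsto_le[OF _ bound quotient this] show ?thesis by simp
qed

lemma segment_in_convex:
  assumes "convex X" "z \<in> X" "y \<in> X" "0 \<le> t" "t \<le> 1"
  shows "z + t *\<^sub>R (y - z) \<in> X"
proof -
  have "z + t *\<^sub>R (y - z) = (1 - t) *\<^sub>R z + t *\<^sub>R y" by (simp add: algebra_simps)
  then show ?thesis using assms unfolding convex_alt by auto
qed

lemma has_derivative_along_segment: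
  fixes G :: "'a::real_normed_vector \<Rightarrow> real"
  assumes "convex X" "z \<in> X" "y \<in> X" and G: "(G has_derivative D) (at z within X)"
  shows "((\<lambda>t. G (z + t *\<^sub>R (y - z))) has_real_derivative D (y - z)) (at 0 within {0..1})"
proof -
  interpret D: bounded_linear D using has_derivative_bounded_linear[OF G] .
  let ?h = "\<lambda>t::real. z + t *\<^sub>R (y - z)"
  have "(?h has_derivative (\<lambda>t. t *\<^sub>R (y - z))) (at 0 within {0..1})"
    by (auto intro!: derivative_eq_intros)
  moreover have "(G has_derivative D) (at (?h 0) within ?h ` {0..1})"
    using has_derivative_subset[OF G] segment_in_convex[OF assms(1-3)] by (simp add: image_subset_iff)
  ultimately have "((\<lambda>t. G (?h t)) has_derivative (\<lambda>t. D (t *\<^sub>R (y - z)))) (at 0 within {0..1})"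
    by (rule has_derivative_in_compose)
  moreover have "(\<lambda>t. D (t *\<^sub>R (y - z))) = (*) (D (y - z))"
    by (auto simp: D.scale)
  ultimately show ?thesis unfolding has_field_derivative_def by simp
qed

lemma strongly_convex_on_first_order:
  fixes G :: "'a::real_normed_vector \<Rightarrow> real"
  assumes X: "convex X" and sc: "strongly_convex_on X c G" and z: "z \<in> X" and y: "y \<in> X"
    and G: "(G has_derivative D) (at z within X)"
  shows "G z + D (y - z) + c / 2 * (norm (y - z))\<^sup>2 \<le> G y"
proof -
  have "D (y - z) \<le> G y - G z - c / 2 * (norm (y - z))\<^sup>2"
  proof (rule derivative_le_of_increment_bound[OF has_derivative_along_segment[OF X z y G]])
    fix t :: real assume t: "0 < t" "t \<le> 1"
    define N where "N = (norm (y - z))\<^sup>2"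
    have "z + t *\<^sub>R (y - z) = (1 - t) *\<^sub>R z + t *\<^sub>R y" by (simp add: algebra_simps)
    then have "G (z + t *\<^sub>R (y - z)) \<le> (1 - t) * G z + t * G y - c / 2 * t * (1 - t) * N"
      using sc z y t unfolding strongly_convex_on_def N_def by (auto simp: norm_minus_commute)
    moreover have "(1 - t) * G z + t * G y - c / 2 * t * (1 - t) * N - G z
        = t * (G y - G z - c / 2 * N) + t * t * (c / 2 * N)"
      by (simp add: field_simps)
    ultimately show "G (z + t *\<^sub>R (y - z)) - G (z + 0 *\<^sub>R (y - z))
        \<le> t * (G y - G z - c / 2 * (norm (y - z))\<^sup>2) + t * t * (c / 2 * (norm (y - z))\<^sup>2)"
      unfolding N_def by simp
  qed
  then show ?thesis by simp
qed

lemma minimizer_derivative_nonneg: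
  fixes G :: "'a::real_normed_vector \<Rightarrow> real"
  assumes X: "convex X" and z: "z \<in> X" and y: "y \<in> X" and min: "\<forall>w\<in>X. G z \<le> G w"
    and G: "(G has_derivative D) (at z within X)"
  shows "0 \<le> D (y - z)"
proof -
  have "- D (y - z) \<le> 0"
  proof (rule derivative_le_of_increment_bound[OF DERIV_minus[OF has_derivative_along_segment[OF X z y G]]])
    fix t :: real assume "0 < t" "t \<le> 1"
    then show "- G (z + t *\<^sub>R (y - z)) - - G (z + 0 *\<^sub>R (y - z)) \<le> t * 0 + t * t * 0"
      using min segment_in_convex[OF X z y, of t] by auto
  qed
  then show ?thesis by simp
qed

lemma strongly_convex_minimizer_stability:
  fixes G g :: "'a::real_normed_vector \<Rightarrow> real"
  assumes X: "convex X" and sc: "strongly_convex_on X c (\<lambda>w. G w + g w)"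
    and z: "z \<in> X" and y: "y \<in> X"
    and z_min: "\<forall>w\<in>X. G z \<le> G w" and y_min: "\<forall>w\<in>X. G y + g y \<le> G w + g w"
    and G_z: "(G has_derivative DG) (at z within X)" and g_z: "(g has_derivative Dg) (at z within X)"
    and H_y: "((\<lambda>w. G w + g w) has_derivative DH) (at y within X)"
  shows "c * (norm (y - z))\<^sup>2 \<le> - Dg (y - z)"
proof -
  have "G z + g z + (DG (y - z) + Dg (y - z)) + c / 2 * (norm (y - z))\<^sup>2 \<le> G y + g y"
    using strongly_convex_on_first_order[OF X sc z y has_derivative_add[OF G_z g_z]] by simp
  moreover have "G y + g y + DH (z - y) + c / 2 * (norm (z - y))\<^sup>2 \<le> G z + g z"
    using strongly_convex_on_first_order[OF X sc y z H_y] .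
  moreover have "0 \<le> DH (z - y)"
    using minimizer_derivative_nonneg[OF X y z y_min H_y] .
  moreover have "0 \<le> DG (y - z)"
    using minimizer_derivative_nonneg[OF X z y z_min G_z] .
  ultimately show ?thesis by (simp add: norm_minus_commute)
qed

lemma follow_the_leader_stability:
  fixes g :: "nat \<Rightarrow> 'a::real_normed_vector \<Rightarrow> real"
  assumes X: "convex X"
    and sc: "\<And>j. 1 \<le> j \<Longrightarrow> strongly_convex_on X c (g j)"
    and deriv: "\<And>j w. w \<in> X \<Longrightarrow> (g j has_derivative Dg j w) (at w within X)"
    and z: "z \<in> X" and y: "y \<in> X"
    and z_min: "\<forall>w\<in>X. (\<Sum>j=1..p. g j z) \<le> (\<Sum>j=1..p. g j w)"
    and y_min: "\<forall>w\<in>X. (\<Sum>j=1..Suc p. g j y) \<le> (\<Sum>j=1..Suc p. g j w)"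
  shows "real (Suc p) * c * (norm (y - z))\<^sup>2 \<le> - Dg (Suc p) z (y - z)"
    and "0 \<le> (\<Sum>j=1..p. Dg j z (y - z))"
proof -
  have leader_deriv: "((\<lambda>w. \<Sum>j=1..K. g j w) has_derivative (\<lambda>v. \<Sum>j=1..K. Dg j w v)) (at w within X)"
    if "w \<in> X" for K w
    using that by (intro has_derivative_sum deriv)
  have "strongly_convex_on X (\<Sum>j=1..Suc p. c) (\<lambda>w. \<Sum>j=1..Suc p. g j w)"
    by (rule strongly_convex_on_sum) (auto intro: sc)
  then have "strongly_convex_on X (real (Suc p) * c) (\<lambda>w. (\<Sum>j=1..p. g j w) + g (Suc p) w)"
    by simp
  then show "real (Suc p) * c * (norm (y - z))\<^sup>2 \<le> - Dg (Suc p) z (y - z)"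
    using y_min by (intro strongly_convex_minimizer_stability[OF X _ z y z_min _
          leader_deriv[OF z] deriv[OF z] has_derivative_add[OF leader_deriv[OF y] deriv[OF y]]]) simp_all
  show "0 \<le> (\<Sum>j=1..p. Dg j z (y - z))"
    using minimizer_derivative_nonneg[OF X z y z_min leader_deriv[OF z]] .
qed

lemma dual_norm_nonneg: "bounded_linear L \<Longrightarrow> 0 \<le> dual_norm L"
  unfolding dual_norm_def by (rule onorm_pos_le)

lemma dual_norm_le: "bounded_linear L \<Longrightarrow> L v \<le> dual_norm L * norm v"
  unfolding dual_norm_def using onorm[of L v] by simp

lemma le_divide_of_square_le:
  fixes c b t :: real
  assumes "0 < c" "0 \<le> b" "c * t\<^sup>2 \<le> t * b"
  shows "t \<le> b / c"
proof (cases "0 < t")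
  case True
  then have "c * t \<le> b" using assms(3) by (simp add: power2_eq_square mult_ac)
  then show ?thesis using assms(1) by (simp add: le_divide_eq mult.commute)
next
  case False
  then show ?thesis using assms(1,2) by (meson divide_nonneg_pos not_less order_trans)
qed

locale aggrevate_iteration =
  fixes X :: "'a::real_normed_vector set"
    and f :: "'a \<Rightarrow> 's \<Rightarrow> real"
    and Df :: "'s \<Rightarrow> 'a \<Rightarrow> ('a \<Rightarrow> real)"
    and DF :: "'a \<Rightarrow> 'a \<Rightarrow> ('a \<Rightarrow> real)"
    and \<alpha> \<beta> :: real
    and x :: "nat \<Rightarrow> 'a"
    and m :: "nat \<Rightarrow> nat"
    and s :: "nat \<Rightarrow> nat \<Rightarrow> 's"
  assumes X_convex: "convex X"
    and alpha_pos: "0 < \<alpha>"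
    and strongly_convex: "\<And>\<sigma>. strongly_convex_on X \<alpha> (\<lambda>z. f z \<sigma>)"
    and f_deriv: "\<And>\<sigma> z. z \<in> X \<Longrightarrow> ((\<lambda>w. f w \<sigma>) has_derivative Df \<sigma> z) (at z within X)"
    and DF_bounded_linear: "\<And>y z. y \<in> X \<Longrightarrow> z \<in> X \<Longrightarrow> bounded_linear (DF y z)"
    and DF_lipschitz: "\<And>y y' z. y \<in> X \<Longrightarrow> y' \<in> X \<Longrightarrow> z \<in> X \<Longrightarrow>
        dual_norm (\<lambda>v. DF y z v - DF y' z v) \<le> \<beta> * norm (y - y')"
    and x1: "x 1 \<in> X"
    and m_pos: "\<And>k. 1 \<le> k \<Longrightarrow> 1 \<le> m k"
    and x_step: "\<And>k. 1 \<le> k \<Longrightarrow> x (Suc k) \<in> X \<and>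
        (\<forall>y\<in>X. (\<Sum>j=1..k. (1 / real (m j)) * (\<Sum>i=1..m j. f (x (Suc k)) (s j i)))
               \<le> (\<Sum>j=1..k. (1 / real (m j)) * (\<Sum>i=1..m j. f y (s j i))))"
begin

definition sample_loss :: "nat \<Rightarrow> 'a \<Rightarrow> real" where
  "sample_loss j w = 1 / real (m j) * (\<Sum>i=1..m j. f w (s j i))"

definition sample_grad :: "nat \<Rightarrow> 'a \<Rightarrow> 'a \<Rightarrow> real" where
  "sample_grad j w v = 1 / real (m j) * (\<Sum>i=1..m j. Df (s j i) w v)"

definition grad_error :: "nat \<Rightarrow> 'a \<Rightarrow> 'a \<Rightarrow> real" where
  "grad_error k z v = DF (x k) z v - sample_grad k z v"

definition mean_grad_error :: "nat \<Rightarrow> 'a \<Rightarrow> 'a \<Rightarrow> real" where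
  "mean_grad_error j z v = 1 / real j * (\<Sum>k=1..j. grad_error k z v)"

definition mean_dist :: "nat \<Rightarrow> real" where
  "mean_dist n = 1 / real (n - 1) * (\<Sum>k=1..n-1. norm (x n - x k))"

lemma iterate_in: "1 \<le> k \<Longrightarrow> x k \<in> X"
proof (induction k)
  case (Suc k)
  then show ?case using x1 x_step[of k] by (cases "k = 0") auto
qed simp

lemma iterate_minimizes:
  "1 \<le> k \<Longrightarrow> \<forall>w\<in>X. (\<Sum>j=1..k. sample_loss j (x (Suc k))) \<le> (\<Sum>j=1..k. sample_loss j w)"
  using x_step unfolding sample_loss_def by simp

lemma sample_loss_strongly_convex: "1 \<le> j \<Longrightarrow> strongly_convex_on X \<alpha> (sample_loss j)"
  using strongly_convex_on_mean[of "{1..m j}" X \<alpha> "\<lambda>i w. f w (s j i)"] m_pos strongly_convex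
  unfolding sample_loss_def[abs_def] by simp

lemma sample_loss_has_derivative:
  "w \<in> X \<Longrightarrow> (sample_loss j has_derivative sample_grad j w) (at w within X)"
  unfolding sample_loss_def[abs_def] sample_grad_def[abs_def]
  by (intro has_derivative_sum has_derivative_mult_right f_deriv)

lemma grad_error_bounded_linear: "1 \<le> k \<Longrightarrow> z \<in> X \<Longrightarrow> bounded_linear (grad_error k z)"
  unfolding grad_error_def[abs_def]
  using has_derivative_bounded_linear[OF sample_loss_has_derivative]
  by (intro bounded_linear_sub DF_bounded_linear iterate_in)

lemma mean_grad_error_bounded_linear: "z \<in> X \<Longrightarrow> bounded_linear (mean_grad_error j z)"
  unfolding mean_grad_error_def[abs_def]
  by (intro bounded_linear_const_mult bounded_linear_sum grad_error_bounded_linear) auto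

lemma leader_step_stability:
  assumes "n = Suc p" "1 \<le> p"
  defines "\<delta> \<equiv> x (Suc n) - x n"
  shows "real n * \<alpha> * (norm \<delta>)\<^sup>2 \<le> grad_error n (x n) \<delta> - DF (x n) (x n) \<delta>"
    and "real p * mean_grad_error p (x n) \<delta> \<le> (\<Sum>k=1..p. DF (x k) (x n) \<delta>)"
proof -
  have in_X: "x n \<in> X" "x (Suc n) \<in> X" using assms(1) by (simp_all add: iterate_in)
  have z_min: "\<forall>w\<in>X. (\<Sum>j=1..p. sample_loss j (x n)) \<le> (\<Sum>j=1..p. sample_loss j w)"
    using iterate_minimizes[OF assms(2)] assms(1) by simp
  have y_min: "\<forall>w\<in>X. (\<Sum>j=1..Suc p. sample_loss j (x (Suc n))) \<le> (\<Sum>j=1..Suc p. sample_loss j w)"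
    using iterate_minimizes[of n] assms(1) by simp
  note stability = follow_the_leader_stability[OF X_convex sample_loss_strongly_convex
      sample_loss_has_derivative in_X z_min y_min]
  show "real n * \<alpha> * (norm \<delta>)\<^sup>2 \<le> grad_error n (x n) \<delta> - DF (x n) (x n) \<delta>"
    using stability(1) unfolding grad_error_def \<delta>_def assms(1) by simp
  show "real p * mean_grad_error p (x n) \<delta> \<le> (\<Sum>k=1..p. DF (x k) (x n) \<delta>)"
    using stability(2) assms(2) unfolding mean_grad_error_def grad_error_def \<delta>_def
    by (simp add: sum_subtractf)
qed

lemma gradient_drift_le:
  assumes "1 \<le> k" "z \<in> X"
  shows "DF (x k) z v - DF z z v \<le> \<beta> * norm (z - x k) * norm v"
proof -
  have "bounded_linear (\<lambda>v. DF (x k) z v - DF z z v)"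
    using assms by (intro bounded_linear_sub DF_bounded_linear iterate_in)
  then have "DF (x k) z v - DF z z v \<le> dual_norm (\<lambda>v. DF (x k) z v - DF z z v) * norm v"
    by (rule dual_norm_le)
  also have "\<dots> \<le> \<beta> * norm (x k - z) * norm v"
    using DF_lipschitz[OF iterate_in[OF assms(1)] assms(2) assms(2)] by (intro mult_right_mono) auto
  finally show ?thesis by (simp add: norm_minus_commute)
qed

lemma beta_mult_dist_nonneg:
  assumes "1 \<le> k" "z \<in> X"
  shows "0 \<le> \<beta> * norm (z - x k)"
proof -
  have "bounded_linear (\<lambda>v. DF z z v - DF (x k) z v)"
    using assms by (intro bounded_linear_sub DF_bounded_linear iterate_in)
  then show ?thesis
    using dual_norm_nonneg DF_lipschitz[OF assms(2) iterate_in[OF assms(1)] assms(2)] by fastforce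
qed

theorem leader_step_bound:
  assumes "2 \<le> n"
  shows "norm (x (Suc n) - x n) \<le> (\<beta> * mean_dist n + dual_norm (grad_error n (x n))
      + dual_norm (mean_grad_error (n - 1) (x n))) / (real n * \<alpha>)"
proof -
  obtain p where n: "n = Suc p" and p: "1 \<le> p" using assms by (cases n) auto
  define z where "z = x n"
  define \<delta> where "\<delta> = x (Suc n) - z"
  have z: "z \<in> X" unfolding z_def using n by (simp add: iterate_in)
  note stability = leader_step_stability[OF n p, folded z_def, folded \<delta>_def]
  have dist: "mean_dist n = 1 / real p * (\<Sum>k=1..p. norm (z - x k))"
    unfolding mean_dist_def z_def n by simp
  have "(\<Sum>k=1..p. DF (x k) z \<delta> - DF z z \<delta>) \<le> (\<Sum>k=1..p. \<beta> * norm \<delta> * norm (z - x k))"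
    using gradient_drift_le[OF _ z] by (intro sum_mono) (simp add: mult_ac)
  then have scaled: "real p * (- DF z z \<delta>) \<le> real p * (\<beta> * mean_dist n * norm \<delta> - mean_grad_error p z \<delta>)"
    using stability(2) p unfolding dist by (simp add: sum_subtractf sum_distrib_left algebra_simps)
  have "- DF z z \<delta> \<le> \<beta> * mean_dist n * norm \<delta> - mean_grad_error p z \<delta>"
    using mult_left_le_imp_le[OF scaled] p by simp
  moreover have "grad_error n z \<delta> \<le> dual_norm (grad_error n z) * norm \<delta>"
    using grad_error_bounded_linear[OF _ z] n by (intro dual_norm_le) simp
  moreover have "- mean_grad_error p z \<delta> \<le> dual_norm (mean_grad_error p z) * norm \<delta>"
    using dual_norm_le[OF mean_grad_error_bounded_linear[OF z], of p "- \<delta>"]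
    by (simp add: linear_neg[OF bounded_linear.linear[OF mean_grad_error_bounded_linear[OF z]]])
  ultimately have "real n * \<alpha> * (norm \<delta>)\<^sup>2
      \<le> norm \<delta> * (\<beta> * mean_dist n + dual_norm (grad_error n z) + dual_norm (mean_grad_error p z))"
    using stability(1) by (simp add: algebra_simps)
  moreover have "0 \<le> \<beta> * mean_dist n"
    unfolding dist using beta_mult_dist_nonneg[OF _ z]
    by (auto simp: sum_distrib_left intro!: sum_nonneg)
  ultimately show ?thesis
    using alpha_pos n z grad_error_bounded_linear mean_grad_error_bounded_linear
    unfolding z_def \<delta>_def
    by (intro le_divide_of_square_le) (auto intro!: add_nonneg_nonneg dual_norm_nonneg)
qed

end

theorem lemma11:
  fixes X :: "'a::real_normed_vector set"
    and d :: "'a \<Rightarrow> 's measure"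
    and f :: "'a \<Rightarrow> 's \<Rightarrow> real"
    and Df :: "'s \<Rightarrow> 'a \<Rightarrow> ('a \<Rightarrow> real)"
    and DF :: "'a \<Rightarrow> 'a \<Rightarrow> ('a \<Rightarrow> real)"
    and \<alpha> \<beta> :: real
    and x :: "nat \<Rightarrow> 'a"
    and m :: "nat \<Rightarrow> nat"
    and s :: "nat \<Rightarrow> nat \<Rightarrow> 's"
    and n :: nat
  assumes X_convex: "convex X"
    and alpha_pos: "\<alpha> > 0"
    and prob: "\<And>y. y \<in> X \<Longrightarrow> prob_space (d y)"
    and integrable: "\<And>y z. y \<in> X \<Longrightarrow> z \<in> X \<Longrightarrow> integrable (d y) (f z)"
    and strongly_convex: "\<And>\<sigma>. strongly_convex_on X \<alpha> (\<lambda>z. f z \<sigma>)"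
    and f_deriv: "\<And>\<sigma> z. z \<in> X \<Longrightarrow> ((\<lambda>w. f w \<sigma>) has_derivative Df \<sigma> z) (at z within X)"
    and F_deriv: "\<And>y z. y \<in> X \<Longrightarrow> z \<in> X \<Longrightarrow>
        ((\<lambda>w. \<integral>\<sigma>. f w \<sigma> \<partial>(d y)) has_derivative DF y z) (at z within X)"
    and F_lipschitz: "\<And>y y' z. y \<in> X \<Longrightarrow> y' \<in> X \<Longrightarrow> z \<in> X \<Longrightarrow>
        dual_norm (\<lambda>v. DF y z v - DF y' z v) \<le> \<beta> * norm (y - y')"
    and x1: "x 1 \<in> X"
    and m_pos: "\<And>k. k \<ge> 1 \<Longrightarrow> m k \<ge> 1"
    and samples: "\<And>k i. k \<ge> 1 \<Longrightarrow> 1 \<le> i \<Longrightarrow> i \<le> m k \<Longrightarrow> s k i \<in> space (d (x k))"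
    and x_step: "\<And>k. k \<ge> 1 \<Longrightarrow> x (Suc k) \<in> X \<and>
        (\<forall>y\<in>X. (\<Sum>j=1..k. (1 / real (m j)) * (\<Sum>i=1..m j. f (x (Suc k)) (s j i)))
               \<le> (\<Sum>j=1..k. (1 / real (m j)) * (\<Sum>i=1..m j. f y (s j i))))"
    and n_ge: "n \<ge> 2"
  shows "let \<xi> = (\<lambda>k z v. DF (x k) z v - (1 / real (m k)) * (\<Sum>i=1..m k. Df (s k i) z v));
             \<xi>bar = (\<lambda>j z v. (1 / real j) * (\<Sum>k=1..j. \<xi> k z v));
             \<theta> = \<beta> / \<alpha>;
             S = (1 / real (n - 1)) * (\<Sum>k=1..n-1. norm (x n - x k))
         in norm (x (Suc n) - x n)
              \<le> \<theta> * S / real n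
                + 1 / (real n * \<alpha>) * (dual_norm (\<xi> n (x n)) + dual_norm (\<xi>bar (n - 1) (x n)))"
proof -
  interpret aggrevate_iteration X f Df DF \<alpha> \<beta> x m s
    using X_convex alpha_pos strongly_convex f_deriv has_derivative_bounded_linear[OF F_deriv]
      F_lipschitz x1 m_pos x_step
    unfolding aggrevate_iteration_def by blast
  have rearrange: "\<beta> / \<alpha> * S / real n + 1 / (real n * \<alpha>) * (A + B) = (\<beta> * S + A + B) / (real n * \<alpha>)"
    for S A B
    using alpha_pos n_ge by (simp add: field_simps)
  show ?thesis
    using leader_step_bound[OF n_ge]
    unfolding Let_def rearrange mean_dist_def grad_error_def[abs_def] mean_grad_error_def[abs_def]
      sample_grad_def .
qed

end
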